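(* Let $\Lambda\subseteq\mathbb Z^D$ be a lattice inducing a lattice tiling of the shape $\mathcal S$, with $n=|\mathcal S|$. Let $\delta$ be a nonzero ternary vector such that $(\Lambda,\mathcal S,\delta)$ defines a folding, with folded-row $p_0,p_1,\dots$. Let $E\subseteq\mathbb Z_n$ be a $B_2$-sequence over $\mathbb Z_n$, and identify each $a\in E$ with its representative in $\{0,1,\dots,n-1\}$. Then: <ol> <li>The set of dots $\{p_a : a\in E\}\subseteq\mathcal S$ (the $B_2$-sequence placed along the folded-row) is a $D$-dimensional DDC.</li> <li>The set $X=\{a\delta+\lambda : a\in E,\ \lambda\in\Lambda\}$ is an infinite $\mathcal S$-DDC with $|E|$ dots, and $X\cap\mathcal S=\{p_a:a\in E\}$.</li> </ol>
   Context: Let $D\ge 1$. A shape is a finite nonempty set $\mathcal S\subset\mathbb Z^D$ containing the origin; the origin is its distinguished center point. A lattice is a set $\Lambda=\{\sum_{j=1}^D u_jv_j : u_1,\dots,u_D\in\mathbb Z\}$ for linearly independent $v_1,\dots,v_D\in\mathbb Z^D$. $\Lambda$ induces a lattice tiling of $\mathcal S$ if the translates $\mathcal S+\lambda$, $\lambda\in\Lambda$, are pairwise disjoint and cover $\mathbb Z^D$. The translate $\mathcal S+\lambda$ is called the copy of $\mathcal S$ with center $\lambda$. For $x\in\mathbb Z^D$, $c(x)$ denotes the unique $\lambda\in\Lambda$ with $x\in\mathcal S+\lambda$. A ternary vector (direction) is a nonzero $\delta\in\{-1,0,+1\}^D$. The folded-row of $(\Lambda,\mathcal S,\delta)$ is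 the sequence $p_0,p_1,p_2,\dots$ defined by $p_0=0$ and $p_{k+1}=(p_k+\delta)-c(p_k+\delta)$. The triple $(\Lambda,\mathcal S,\delta)$ defines a folding if every element of $\mathcal S$ occurs in its folded-row. A subset $E=\{a_1,\dots,a_m\}$ of an abelian group $A$ (with distinct elements) is a $B_2$-sequence over $A$ if all sums $a_{i_1}+a_{i_2}$ with $1\le i_1\le i_2\le m$ are distinct. A finite set $Y\subseteq\mathbb Z^D$ ("dots") is a distinct difference configuration (DDC) if the vectors $y-y'$, over ordered pairs $(y,y')$ of distinct points of $Y$, are pairwise distinct. A set $X\subseteq\mathbb Z^D$ is an infinite $\mathcal S$-DDC with $m$ dots if for every $t\in\mathbb Z^D$ the set $X\cap(\mathcal S+t)$ has exactly $m$ elements and is a DDC. *)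

theory Defs
  imports "HOL-Analysis.Finite_Cartesian_Product"
begin

text \<open>Points of Z^D are represented as int ^ 'd, the dimension D being CARD('d).\<close>

definition is_shape :: "(int ^ 'd) set \<Rightarrow> bool" where
  "is_shape S \<longleftrightarrow> finite S \<and> S \<noteq> {} \<and> 0 \<in> S"

definition int_lin_indep :: "('d \<Rightarrow> int ^ 'd) \<Rightarrow> bool" where
  "int_lin_indep v \<longleftrightarrow>
     (\<forall>u :: 'd \<Rightarrow> int. (\<Sum>j\<in>UNIV. (\<chi> i. u j * v j $ i)) = 0 \<longrightarrow> (\<forall>j. u j = 0))"

definition lattice_gen :: "('d::finite \<Rightarrow> int ^ 'd) \<Rightarrow> (int ^ 'd) set" where
  "lattice_gen v = {(\<Sum>j\<in>UNIV. (\<chi> i. u j * v j $ i)) | u :: 'd \<Rightarrow> int. True}"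

definition is_lattice :: "(int ^ 'd::finite) set \<Rightarrow> bool" where
  "is_lattice L \<longleftrightarrow> (\<exists>v. int_lin_indep v \<and> L = lattice_gen v)"

definition translate :: "(int ^ 'd) set \<Rightarrow> int ^ 'd \<Rightarrow> (int ^ 'd) set" where
  "translate S t = (\<lambda>s. s + t) ` S"

definition lattice_tiling :: "(int ^ 'd::finite) set \<Rightarrow> (int ^ 'd) set \<Rightarrow> bool" where
  "lattice_tiling L S \<longleftrightarrow>
     (\<forall>l1\<in>L. \<forall>l2\<in>L. l1 \<noteq> l2 \<longrightarrow> translate S l1 \<inter> translate S l2 = {}) \<and>
     (\<Union>l\<in>L. translate S l) = UNIV"

definition center :: "(int ^ 'd) set \<Rightarrow> (int ^ 'd) set \<Rightarrow> int ^ 'd \<Rightarrow> int ^ 'd" where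
  "center L S x = (THE l. l \<in> L \<and> x \<in> translate S l)"

definition ternary :: "int ^ 'd \<Rightarrow> bool" where
  "ternary \<delta> \<longleftrightarrow> \<delta> \<noteq> 0 \<and> (\<forall>i. \<delta> $ i \<in> {-1, 0, 1})"

primrec folded_row ::
  "(int ^ 'd) set \<Rightarrow> (int ^ 'd) set \<Rightarrow> int ^ 'd \<Rightarrow> nat \<Rightarrow> int ^ 'd" where
  "folded_row L S \<delta> 0 = 0"
| "folded_row L S \<delta> (Suc k) =
     (folded_row L S \<delta> k + \<delta>) - center L S (folded_row L S \<delta> k + \<delta>)"

definition defines_folding :: "(int ^ 'd) set \<Rightarrow> (int ^ 'd) set \<Rightarrow> int ^ 'd \<Rightarrow> bool" where
  "defines_folding L S \<delta> \<longleftrightarrow> S \<subseteq> range (folded_row L S \<delta>)"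

definition B2_mod :: "nat \<Rightarrow> nat set \<Rightarrow> bool" where
  "B2_mod n E \<longleftrightarrow> E \<subseteq> {..<n} \<and>
     (\<forall>a\<in>E. \<forall>b\<in>E. \<forall>c\<in>E. \<forall>d\<in>E.
        (a + b) mod n = (c + d) mod n \<longrightarrow> (a = c \<and> b = d) \<or> (a = d \<and> b = c))"

definition is_DDC :: "(int ^ 'd) set \<Rightarrow> bool" where
  "is_DDC Y \<longleftrightarrow> finite Y \<and>
     (\<forall>y1\<in>Y. \<forall>y2\<in>Y. \<forall>y3\<in>Y. \<forall>y4\<in>Y.
        y1 \<noteq> y2 \<longrightarrow> y3 \<noteq> y4 \<longrightarrow> y1 - y2 = y3 - y4 \<longrightarrow> y1 = y3 \<and> y2 = y4)"

definition infinite_S_DDC :: "(int ^ 'd) set \<Rightarrow> (int ^ 'd) set \<Rightarrow> nat \<Rightarrow> bool" where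
  "infinite_S_DDC S X m \<longleftrightarrow>
     (\<forall>t. card (X \<inter> translate S t) = m \<and> is_DDC (X \<inter> translate S t))"

definition int_smult :: "int \<Rightarrow> int ^ 'd \<Rightarrow> int ^ 'd" where
  "int_smult a v = (\<chi> i. a * v $ i)"

end

theory Submission
  imports Defs "HOL-Number_Theory.Cong"
begin

(* Write p_k for the folded-row and n = |S|.  The translates S + lambda tile Z^D,
   so every point x has a unique representative x - c(x) in S, and two points of S that differ
   by a lattice vector coincide.  By induction p_k is the representative of k*delta, i.e.
   p_k - k*delta lies in L.  Hence p_j = p_k iff (j - k)*delta lies in L, so the folded-row is
   periodic with least period m and injective on {0..<m}; since the row covers S (folding),
   m = n, and p_j = p_k iff j = k (mod n).
   Consequently p_i - p_j = p_i' - p_j' forces i + j' = i' + j (mod n), so for every shift k the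
   window {p_(a+k) : a in E} is a DDC with |E| points by the B_2 property.  Finally, if
   -t = k*delta modulo L then X meets S + t exactly in the window translated by t; the window
   for k = 0, t = 0 is {p_a : a in E}. *)

lemma int_smult_eq_vector_mult: "int_smult c v = c *s v"
  by (simp add: int_smult_def vector_scalar_mult_def)

text \<open>The lattice generated by any vectors is an additive subgroup of Z^D closed under
  integer multiples.\<close>

lemma lattice_gen_iff: "x \<in> lattice_gen v \<longleftrightarrow> (\<exists>u. x = (\<Sum>j\<in>UNIV. u j *s v j))"
  by (simp add: lattice_gen_def vector_scalar_mult_def)

lemma lattice_gen_zero: "0 \<in> lattice_gen v"
  unfolding lattice_gen_iff by (rule exI[of _ "\<lambda>_. 0"]) simp

lemma lattice_gen_add:
  assumes "x \<in> lattice_gen v" "y \<in> lattice_gen v"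
  shows "x + y \<in> lattice_gen v"
proof -
  obtain u u' where "x = (\<Sum>j\<in>UNIV. u j *s v j)" "y = (\<Sum>j\<in>UNIV. u' j *s v j)"
    using assms unfolding lattice_gen_iff by blast
  then have "x + y = (\<Sum>j\<in>UNIV. (u j + u' j) *s v j)"
    by (simp add: vector_sadd_rdistrib sum.distrib)
  then show ?thesis unfolding lattice_gen_iff by (rule exI[of _ "\<lambda>j. u j + u' j"])
qed

lemma lattice_gen_smult:
  assumes "x \<in> lattice_gen v"
  shows "c *s x \<in> lattice_gen v"
proof -
  obtain u where "x = (\<Sum>j\<in>UNIV. u j *s v j)"
    using assms unfolding lattice_gen_iff by blast
  then have "c *s x = (\<Sum>j\<in>UNIV. (c * u j) *s v j)"
    by (simp add: vec_eq_iff sum_distrib_left mult.assoc)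
  then show ?thesis unfolding lattice_gen_iff by (rule exI[of _ "\<lambda>j. c * u j"])
qed

lemma lattice_zero: "is_lattice L \<Longrightarrow> 0 \<in> L"
  unfolding is_lattice_def using lattice_gen_zero by blast

lemma lattice_add: "is_lattice L \<Longrightarrow> x \<in> L \<Longrightarrow> y \<in> L \<Longrightarrow> x + y \<in> L"
  unfolding is_lattice_def using lattice_gen_add by blast

lemma lattice_smult: "is_lattice L \<Longrightarrow> x \<in> L \<Longrightarrow> c *s x \<in> L"
  unfolding is_lattice_def using lattice_gen_smult by blast

lemma lattice_diff: "is_lattice L \<Longrightarrow> x \<in> L \<Longrightarrow> y \<in> L \<Longrightarrow> x - y \<in> L"
  using lattice_add[of L x "(-1) *s y"] lattice_smult[of L y "-1"]
  by (simp add: vector_sneg_minus1[symmetric])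

lemma card_translate: "card (translate Y t) = card Y"
  unfolding translate_def by (rule card_image) (simp add: inj_on_def)

lemma is_DDC_translate:
  assumes "is_DDC Y"
  shows "is_DDC (translate Y t)"
proof -
  have "finite (translate Y t)"
    using assms unfolding is_DDC_def translate_def by simp
  moreover have "y1 = y3 \<and> y2 = y4"
    if mem: "y1 \<in> translate Y t" "y2 \<in> translate Y t" "y3 \<in> translate Y t"
      "y4 \<in> translate Y t"
      and diff: "y1 \<noteq> y2" "y3 \<noteq> y4" "y1 - y2 = y3 - y4" for y1 y2 y3 y4
  proof -
    obtain z1 z2 z3 z4 where z: "z1 \<in> Y" "z2 \<in> Y" "z3 \<in> Y" "z4 \<in> Y"
      "y1 = z1 + t" "y2 = z2 + t" "y3 = z3 + t" "y4 = z4 + t"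
      using mem unfolding translate_def by blast
    then have "z1 \<noteq> z2" "z3 \<noteq> z4" "z1 - z2 = z3 - z4"
      using diff by auto
    then have "z1 = z3 \<and> z2 = z4"
      using assms z(1-4) unfolding is_DDC_def by blast
    then show ?thesis using z(5-8) by simp
  qed
  ultimately show ?thesis unfolding is_DDC_def by blast
qed

locale lattice_tiled_shape =
  fixes L S :: "(int ^ 'd::finite) set"
  assumes shape: "is_shape S" and lattice: "is_lattice L" and tiling: "lattice_tiling L S"
begin

lemma shape_rep_unique:
  assumes "s1 \<in> S" "s2 \<in> S" "s1 - s2 \<in> L"
  shows "s1 = s2"
proof (rule ccontr)
  assume "s1 \<noteq> s2"
  then have "translate S 0 \<inter> translate S (s1 - s2) = {}"
    using tiling lattice_zero[OF lattice] assms(3) unfolding lattice_tiling_def by auto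
  moreover have "s1 \<in> translate S 0" "s1 \<in> translate S (s1 - s2)"
    using assms(1,2) unfolding translate_def by force+
  ultimately show False by blast
qed

lemma center_props: "center L S x \<in> L \<and> x - center L S x \<in> S"
proof -
  have "\<exists>!l. l \<in> L \<and> x \<in> translate S l"
    using tiling unfolding lattice_tiling_def by blast
  then have "center L S x \<in> L \<and> x \<in> translate S (center L S x)"
    unfolding center_def by (rule theI')
  then obtain s where "center L S x \<in> L" "s \<in> S" "x = s + center L S x"
    unfolding translate_def by blast
  then show ?thesis by (metis add_diff_cancel_right')
qed

abbreviation row :: "int ^ 'd \<Rightarrow> nat \<Rightarrow> int ^ 'd" where
  "row \<delta> \<equiv> folded_row L S \<delta>"

definition ray :: "int ^ 'd \<Rightarrow> nat \<Rightarrow> int ^ 'd" where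
  "ray \<delta> k = int k *s \<delta>"

lemma ray_add: "ray \<delta> (j + k) = ray \<delta> j + ray \<delta> k"
  by (simp add: ray_def vector_sadd_rdistrib)

lemma ray_Suc: "ray \<delta> (Suc k) = ray \<delta> k + \<delta>"
  using ray_add[of \<delta> k 1] by (simp add: ray_def)

lemma row_in_shape: "row \<delta> k \<in> S"
  using shape center_props by (induction k) (simp_all add: is_shape_def)

lemma row_minus_ray: "row \<delta> k - ray \<delta> k \<in> L"
proof (induction k)
  case 0
  then show ?case using lattice_zero[OF lattice] by (simp add: ray_def)
next
  case (Suc k)
  have "row \<delta> (Suc k) - ray \<delta> (Suc k) = (row \<delta> k - ray \<delta> k) - center L S (row \<delta> k + \<delta>)"
    by (simp add: ray_Suc algebra_simps)
  then show ?case using lattice_diff[OF lattice Suc] center_props by metis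
qed

lemma row_eq_iff: "row \<delta> j = row \<delta> k \<longleftrightarrow> ray \<delta> j - ray \<delta> k \<in> L"
proof -
  have split: "row \<delta> j - row \<delta> k
      = ((row \<delta> j - ray \<delta> j) - (row \<delta> k - ray \<delta> k)) + (ray \<delta> j - ray \<delta> k)"
    by simp
  have reps: "(row \<delta> j - ray \<delta> j) - (row \<delta> k - ray \<delta> k) \<in> L"
    using lattice_diff[OF lattice row_minus_ray row_minus_ray] .
  show ?thesis
  proof
    assume "row \<delta> j = row \<delta> k"
    then show "ray \<delta> j - ray \<delta> k \<in> L"
      using lattice_diff[OF lattice lattice_zero[OF lattice] reps] split by simp
  next
    assume "ray \<delta> j - ray \<delta> k \<in> L"
    then have "row \<delta> j - row \<delta> k \<in> L"
      unfolding split using lattice_add[OF lattice reps] by blast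
    then show "row \<delta> j = row \<delta> k"
      using shape_rep_unique row_in_shape by blast
  qed
qed

lemma ray_in_lattice_exists: "\<exists>m>0. ray \<delta> m \<in> L"
proof -
  have "range (row \<delta>) \<subseteq> S" using row_in_shape by blast
  then have "finite (range (row \<delta>))"
    using shape unfolding is_shape_def by (blast intro: finite_subset)
  then have "\<not> inj (row \<delta>)"
    using finite_imageD infinite_UNIV_nat by blast
  then obtain i i' where "i \<noteq> i'" "row \<delta> i = row \<delta> i'"
    unfolding inj_def by blast
  then obtain j k where jk: "j < k" "row \<delta> j = row \<delta> k"
    by (metis linorder_neqE_nat)
  have "ray \<delta> (k - j) = ray \<delta> k - ray \<delta> j"
    using ray_add[of \<delta> "k - j" j] jk(1) by simp
  then have "ray \<delta> (k - j) \<in> L" using jk(2) row_eq_iff by metis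
  then show ?thesis using jk(1) by (intro exI[of _ "k - j"]) simp
qed

definition period :: "int ^ 'd \<Rightarrow> nat" where
  "period \<delta> = (LEAST m. 0 < m \<and> ray \<delta> m \<in> L)"

lemma period_pos: "0 < period \<delta>" and ray_period: "ray \<delta> (period \<delta>) \<in> L"
  using LeastI_ex[OF ray_in_lattice_exists] unfolding period_def by blast+

lemma row_mod_period: "row \<delta> k = row \<delta> (k mod period \<delta>)"
proof -
  have "ray \<delta> k - ray \<delta> (k mod period \<delta>) = int (k div period \<delta>) *s ray \<delta> (period \<delta>)"
    using ray_add[of \<delta> "k mod period \<delta>" "period \<delta> * (k div period \<delta>)"]
    by (simp add: ray_def vector_smult_assoc mult.commute)
  then show ?thesis using row_eq_iff lattice_smult[OF lattice ray_period] by metis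
qed

lemma row_inj_below_period:
  assumes "i < j" "j < period \<delta>"
  shows "row \<delta> i \<noteq> row \<delta> j"
proof
  assume "row \<delta> i = row \<delta> j"
  moreover have "ray \<delta> (j - i) = ray \<delta> j - ray \<delta> i"
    using ray_add[of \<delta> "j - i" i] assms(1) by simp
  ultimately have "ray \<delta> (j - i) \<in> L" using row_eq_iff by metis
  moreover have "j - i < period \<delta>" "0 < j - i" using assms by auto
  ultimately show False
    using not_less_Least[of "j - i" "\<lambda>m. 0 < m \<and> ray \<delta> m \<in> L"]
    unfolding period_def by blast
qed

lemma row_eq_iff_mod_period: "row \<delta> j = row \<delta> k \<longleftrightarrow> j mod period \<delta> = k mod period \<delta>"
proof
  assume "row \<delta> j = row \<delta> k"
  then have "row \<delta> (j mod period \<delta>) = row \<delta> (k mod period \<delta>)"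
    using row_mod_period by metis
  moreover have "j mod period \<delta> < period \<delta>" "k mod period \<delta> < period \<delta>"
    using period_pos by simp_all
  ultimately show "j mod period \<delta> = k mod period \<delta>"
    using row_inj_below_period linorder_neqE_nat by metis
qed (metis row_mod_period)

lemma row_image_period: "range (row \<delta>) = row \<delta> ` {..<period \<delta>}"
proof (intro equalityI subsetI)
  fix x assume "x \<in> range (row \<delta>)"
  then obtain k where "x = row \<delta> k" by blast
  then have "x = row \<delta> (k mod period \<delta>)" using row_mod_period by metis
  moreover have "k mod period \<delta> < period \<delta>" using period_pos by simp
  ultimately show "x \<in> row \<delta> ` {..<period \<delta>}" by blast
qed blast

end

locale folding = lattice_tiled_shape L S for L S :: "(int ^ 'd::finite) set" +
  fixes \<delta> :: "int ^ 'd"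
  assumes folds: "defines_folding L S \<delta>"
begin

abbreviation p :: "nat \<Rightarrow> int ^ 'd" where
  "p \<equiv> row \<delta>"

text \<open>A folding row visits S exactly once per period, so its period is |S|.\<close>

lemma period_eq_card: "period \<delta> = card S"
proof -
  have "S = range p"
    using folds row_in_shape unfolding defines_folding_def by blast
  also have "\<dots> = p ` {..<period \<delta>}" by (rule row_image_period)
  finally have "card S = card (p ` {..<period \<delta>})" by simp
  also have "\<dots> = period \<delta>"
    by (subst card_image) (auto simp: inj_on_def row_eq_iff_mod_period)
  finally show ?thesis by simp
qed

lemma row_eq_iff_mod_card: "p j = p k \<longleftrightarrow> j mod card S = k mod card S"
  using row_eq_iff_mod_period period_eq_card by simp

text \<open>Equal differences along the row force equal index sums modulo |S|; this is what
  turns the B_2 property into the distinct difference property.\<close>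

lemma row_diff_eq_imp_sum_cong:
  assumes "p i - p j = p i' - p j'"
  shows "(i + j') mod card S = (i' + j) mod card S"
proof -
  have "ray \<delta> (i + j') - ray \<delta> (i' + j)
      = ((p i' - ray \<delta> i') - (p i - ray \<delta> i)) + ((p j - ray \<delta> j) - (p j' - ray \<delta> j'))"
    using assms by (simp add: ray_add algebra_simps)
  also have "\<dots> \<in> L"
    by (intro lattice_add[OF lattice] lattice_diff[OF lattice] row_minus_ray)
  finally show ?thesis using row_eq_iff row_eq_iff_mod_card by blast
qed

lemma ray_rep_exists: "\<exists>k. - t - ray \<delta> k \<in> L"
proof -
  have "- t - center L S (- t) \<in> range p"
    using center_props folds unfolding defines_folding_def by blast
  then obtain k where k: "p k = - t - center L S (- t)" by (metis rangeE)
  have "- t - ray \<delta> k = (p k - ray \<delta> k) + center L S (- t)"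
    using k by simp
  then show ?thesis using lattice_add[OF lattice row_minus_ray] center_props by metis
qed

definition window :: "nat set \<Rightarrow> nat \<Rightarrow> (int ^ 'd) set" where
  "window E k = (\<lambda>a. p (a + k)) ` E"

abbreviation dots :: "nat set \<Rightarrow> (int ^ 'd) set" where
  "dots E \<equiv> {int_smult (int a) \<delta> + l | a l. a \<in> E \<and> l \<in> L}"

lemma dots_inter_translate:
  assumes k: "- t - ray \<delta> k \<in> L"
  shows "dots E \<inter> translate S t = translate (window E k) t"
proof (intro equalityI subsetI)
  fix x assume "x \<in> dots E \<inter> translate S t"
  then obtain a l s where x: "a \<in> E" "l \<in> L" "x = ray \<delta> a + l" "s \<in> S" "x = s + t"
    unfolding translate_def ray_def int_smult_eq_vector_mult by blast
  have "s - p (a + k) = (l + (- t - ray \<delta> k)) - (p (a + k) - ray \<delta> (a + k))"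
    using x by (simp add: ray_add algebra_simps)
  also have "\<dots> \<in> L"
    by (intro lattice_add[OF lattice] lattice_diff[OF lattice] x(2) k row_minus_ray)
  finally have "s = p (a + k)" using shape_rep_unique x(4) row_in_shape by blast
  then show "x \<in> translate (window E k) t"
    using x unfolding window_def translate_def by blast
next
  fix x assume "x \<in> translate (window E k) t"
  then obtain a where a: "a \<in> E" "x = p (a + k) + t"
    unfolding window_def translate_def by blast
  define l where "l = (p (a + k) - ray \<delta> (a + k)) - (- t - ray \<delta> k)"
  have "l \<in> L" unfolding l_def using lattice_diff[OF lattice row_minus_ray k] .
  moreover have "x = int_smult (int a) \<delta> + l"
    unfolding l_def a(2) int_smult_eq_vector_mult by (simp add: ray_def vector_sadd_rdistrib)
  moreover have "x \<in> translate S t"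
    unfolding translate_def a(2) using row_in_shape by blast
  ultimately show "x \<in> dots E \<inter> translate S t" using a(1) by blast
qed

context
  fixes E :: "nat set"
  assumes B2: "B2_mod (card S) E"
begin

lemma B2_residues: "a \<in> E \<Longrightarrow> a < card S"
  using B2 unfolding B2_mod_def by blast

lemma window_card: "card (window E k) = card E"
  unfolding window_def
proof (rule card_image, rule inj_onI)
  fix a b assume "a \<in> E" "b \<in> E" "p (a + k) = p (b + k)"
  then have "[a + k = b + k] (mod card S)" and "a < card S" "b < card S"
    using row_eq_iff_mod_card B2_residues unfolding cong_def by blast+
  then show "a = b" unfolding cong_add_rcancel_nat by (simp add: cong_def)
qed

lemma window_DDC: "is_DDC (window E k)"
proof -
  have "finite (window E k)"
    using B2 unfolding window_def B2_mod_def by (auto intro: finite_subset)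
  moreover have "y1 = y3 \<and> y2 = y4"
    if y: "y1 \<in> window E k" "y2 \<in> window E k" "y3 \<in> window E k" "y4 \<in> window E k"
      and ne: "y1 \<noteq> y2" "y3 \<noteq> y4" and eq: "y1 - y2 = y3 - y4" for y1 y2 y3 y4
  proof -
    obtain a b c d where abcd: "a \<in> E" "b \<in> E" "c \<in> E" "d \<in> E"
      "y1 = p (a + k)" "y2 = p (b + k)" "y3 = p (c + k)" "y4 = p (d + k)"
      using y unfolding window_def by blast
    have "((a + d) + (k + k)) mod card S = ((c + b) + (k + k)) mod card S"
      using row_diff_eq_imp_sum_cong[of "a + k" "b + k" "c + k" "d + k"] eq abcd
      by (simp add: add_ac)
    then have "(a + d) mod card S = (c + b) mod card S"
      using cong_add_rcancel_nat unfolding cong_def by blast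
    then have "(a = c \<and> d = b) \<or> (a = b \<and> d = c)"
      using B2 abcd(1-4) unfolding B2_mod_def by blast
    then show ?thesis using abcd ne by auto
  qed
  ultimately show ?thesis unfolding is_DDC_def by blast
qed

lemma dots_infinite_S_DDC: "infinite_S_DDC S (dots E) (card E)"
  unfolding infinite_S_DDC_def
proof
  fix t
  obtain k where "- t - ray \<delta> k \<in> L" using ray_rep_exists by blast
  then have "dots E \<inter> translate S t = translate (window E k) t"
    by (rule dots_inter_translate)
  then show "card (dots E \<inter> translate S t) = card E \<and> is_DDC (dots E \<inter> translate S t)"
    by (simp add: card_translate window_card window_DDC is_DDC_translate)
qed

end

lemma window_0: "window E 0 = {p a | a. a \<in> E}"
  unfolding window_def by auto

lemma window_subset_shape: "window E k \<subseteq> S"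
  unfolding window_def using row_in_shape by blast

lemma dots_inter_shape: "dots E \<inter> S = window E 0"
  using dots_inter_translate[of 0 0 E] lattice_zero[OF lattice]
  by (simp add: ray_def translate_def)

end

theorem mainTheorem9:
  fixes L S :: "(int ^ 'd::finite) set" and \<delta> :: "int ^ 'd" and E :: "nat set"
  assumes "is_shape S"
    and "is_lattice L"
    and "lattice_tiling L S"
    and "ternary \<delta>"
    and "defines_folding L S \<delta>"
    and "B2_mod (card S) E"
  shows "{folded_row L S \<delta> a | a. a \<in> E} \<subseteq> S
       \<and> is_DDC {folded_row L S \<delta> a | a. a \<in> E}
       \<and> infinite_S_DDC S {int_smult (int a) \<delta> + l | a l. a \<in> E \<and> l \<in> L} (card E)
       \<and> {int_smult (int a) \<delta> + l | a l. a \<in> E \<and> l \<in> L} \<inter> S = {folded_row L S \<delta> a | a. a \<in> E}"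
proof -
  interpret folding L S \<delta>
    using assms by unfold_locales
  show ?thesis
    unfolding window_0[symmetric]
    by (intro conjI window_subset_shape window_DDC[OF assms(6)]
        dots_infinite_S_DDC[OF assms(6)] dots_inter_shape)
qed

end
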